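(* Let $\mathcal G=(\mathcal N,\mathcal E_Q)$ be an undirected connected graph on the player set $\mathcal N=[n]$, and let $(\mathcal N,\mathcal S,\mathcal A,\mathbb P,(r_i)_{i\in\mathcal N},\gamma)$ be an infinite-horizon $\gamma$-discounted Markov game with $n>2$ players. Then this Markov game is an NMG with respect to $\mathcal G$ if and only if both of the following hold: (1) for each $i\in\mathcal N$, $s\in\mathcal S$, $a_i\in\mathcal A_i$, the function $r_i(s,a_i,\cdot)$ (of $a_{-i}$) is decomposable with respect to $\mathcal E_{Q,i}$, i.e. there are non-negative functions $r_{i,j}(s,a_i,\cdot):\mathcal A_j\to\mathbb R_{\ge 0}$, $j\in\mathcal E_{Q,i}$, with $r_i(s,\mathbf a)=\sum_{j\in\mathcal E_{Q,i}}r_{i,j}(s,a_i,a_j)$ for all $\mathbf a\in\mathcal A$; (2) for each $s,s'\in\mathcal S$, the function $\mathbf a\mapsto\mathbb P(s'\mid s,\mathbf a)$ is decomposable with respect to $\mathcal N_C$, i.e. if $\mathcal N_C\neq\emptyset$ there are non-negative functions $\mathbb F_i(s'\mid s,\cdot):\mathcal A_i\to\mathbb R_{\ge0}$, $i\in\mathcal N_C$, with $\mathbb P(s'\mid s,\mathbf a)=\sum_{i\in\mathcal N_C}\mathbb F_i(s'\mid s,a_i)$ for all $\mathbf a$, and if $\mathcal N_C=\emptyset$ there is a non-negative constant $\mathbb F_o(s'\mid s)$ with $\mathbb P(s'\mid s,\mathbf a)=\mathbb F_o(s'\mid s)$ for all $\mathbf a$. Moreover, the Markov game is a zero-sum NMG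 with respect to $\mathcal G$ if and only if (1) and (2) hold and, in addition, for every $s\in\mathcal S$ the network game with payoff functions $(r_{i,j}(s,\cdot,\cdot))_{(i,j)\in\mathcal E_Q}$ from (1) is zero-sum, i.e. $\sum_{i\in\mathcal N}\sum_{j\in\mathcal E_{Q,i}}r_{i,j}(s,a_i,a_j)=0$ for all $\mathbf a\in\mathcal A$. Finally, when there are exactly two players, every Markov game is an NMG and every zero-sum Markov game is a zero-sum NMG.
   Context: An infinite-horizon $\gamma$-discounted Markov game $(\mathcal N,\mathcal S,\mathcal A,\mathbb P,(r_i)_{i\in\mathcal N},\gamma)$ has finite player set $\mathcal N=[n]$, finite state space $\mathcal S$, finite action sets $\mathcal A_i$ with $\mathcal A=\prod_{i}\mathcal A_i$, transition kernel $\mathbb P(\cdot\mid s,\mathbf a)\in\Delta(\mathcal S)$, rewards $r_i:\mathcal S\times\mathcal A\to[0,R]$, and $\gamma\in(0,1)$. For a graph $(\mathcal N,\mathcal E)$, $\mathcal E_i$ denotes the set of neighbors of $i$ (excluding $i$), and $\mathcal N_C$ denotes the set of nodes adjacent to every other node (possibly empty). The game is an NMG (Markov game with networked separable interactions) with respect to $\mathcal G=(\mathcal N,\mathcal E_Q)$ if for every function $V:\mathcal S\to\mathbb R$, setting $Q_i^V(s,\mathbf a):=r_i(s,\mathbf a)+\gamma\sum_{s'}\mathbb P(s'\mid s,\mathbf a)V(s')$, there exist functions $(Q^V_{i,j})_{(i,j)\in\mathcal E_Q}$ with $Q_i^V(s,\mathbf a)=\sum_{j\in\mathcal E_{Q,i}}Q^V_{i,j}(s,a_i,a_j)$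 for all $i,s,\mathbf a$. It is a zero-sum NMG if in addition, for every $s$, the functions $Q^{\mathbf 0}_{i,j}(s,\cdot,\cdot)$ (with $V\equiv0$) form a zero-sum network game, i.e. $\sum_i\sum_{j\in\mathcal E_{Q,i}}Q^{\mathbf0}_{i,j}(s,a_i,a_j)=0$ for all $\mathbf a$. A zero-sum Markov game means $\sum_i r_i(s,\mathbf a)=0$ for all $s,\mathbf a$. *)

theory Defs
  imports Complex_Main "HOL-Library.FuncSet"
begin

text \<open>Players are 0,...,n-1; actions of all players live in a common type 'a,
  player i having the action set A i; joint action profiles are the extensional
  functions in PiE {..<n} A.
  P s a s' is the transition probability P(s' | s, a); r i s a is the reward of player i.\<close>

definition profiles :: "nat \<Rightarrow> (nat \<Rightarrow> 'a set) \<Rightarrow> (nat \<Rightarrow> 'a) set" where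
  "profiles n A = PiE {..<n} A"

definition markov_game ::
  "nat \<Rightarrow> (nat \<Rightarrow> 'a set) \<Rightarrow> ('s::finite \<Rightarrow> (nat \<Rightarrow> 'a) \<Rightarrow> 's \<Rightarrow> real)
     \<Rightarrow> (nat \<Rightarrow> 's \<Rightarrow> (nat \<Rightarrow> 'a) \<Rightarrow> real) \<Rightarrow> real \<Rightarrow> real \<Rightarrow> bool" where
  "markov_game n A P r R \<gamma> \<longleftrightarrow>
     (\<forall>i<n. finite (A i) \<and> A i \<noteq> {}) \<and>
     (\<forall>s. \<forall>a\<in>profiles n A. (\<forall>s'. P s a s' \<ge> 0) \<and> (\<Sum>s'\<in>UNIV. P s a s') = 1) \<and>
     (\<forall>i<n. \<forall>s. \<forall>a\<in>profiles n A. 0 \<le> r i s a \<and> r i s a \<le> R) \<and>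
     0 < \<gamma> \<and> \<gamma> < 1"

definition undirected_graph :: "nat \<Rightarrow> (nat \<times> nat) set \<Rightarrow> bool" where
  "undirected_graph n E \<longleftrightarrow> E \<subseteq> {..<n} \<times> {..<n} \<and> sym E \<and> (\<forall>i. (i, i) \<notin> E)"

definition connected_graph :: "nat \<Rightarrow> (nat \<times> nat) set \<Rightarrow> bool" where
  "connected_graph n E \<longleftrightarrow> undirected_graph n E \<and> (\<forall>i<n. \<forall>j<n. (i, j) \<in> E\<^sup>*)"

definition nbrs :: "(nat \<times> nat) set \<Rightarrow> nat \<Rightarrow> nat set" where
  "nbrs E i = {j. (i, j) \<in> E}"

definition central_nodes :: "nat \<Rightarrow> (nat \<times> nat) set \<Rightarrow> nat set" where
  "central_nodes n E = {i. i < n \<and> (\<forall>j<n. j \<noteq> i \<longrightarrow> (i, j) \<in> E)}"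

definition Qfun ::
  "(nat \<Rightarrow> 's::finite \<Rightarrow> (nat \<Rightarrow> 'a) \<Rightarrow> real) \<Rightarrow> ('s \<Rightarrow> (nat \<Rightarrow> 'a) \<Rightarrow> 's \<Rightarrow> real)
     \<Rightarrow> real \<Rightarrow> ('s \<Rightarrow> real) \<Rightarrow> nat \<Rightarrow> 's \<Rightarrow> (nat \<Rightarrow> 'a) \<Rightarrow> real" where
  "Qfun r P \<gamma> V i s a = r i s a + \<gamma> * (\<Sum>s'\<in>UNIV. P s a s' * V s')"

definition Q_decomp where
  "Q_decomp n A E r P \<gamma> V Qd \<longleftrightarrow>
     (\<forall>i<n. \<forall>s. \<forall>a\<in>profiles n A.
        Qfun r P \<gamma> V i s a = (\<Sum>j\<in>nbrs E i. Qd i j s (a i) (a j)))"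

definition is_NMG where
  "is_NMG n A P r \<gamma> E \<longleftrightarrow> (\<forall>V. \<exists>Qd. Q_decomp n A E r P \<gamma> V Qd)"

definition zero_sum_network where
  "zero_sum_network n A E Qd \<longleftrightarrow>
     (\<forall>s. \<forall>a\<in>profiles n A. (\<Sum>i<n. \<Sum>j\<in>nbrs E i. Qd i j s (a i) (a j)) = 0)"

definition is_zero_sum_NMG where
  "is_zero_sum_NMG n A P r \<gamma> E \<longleftrightarrow> is_NMG n A P r \<gamma> E \<and>
     (\<exists>Qd. Q_decomp n A E r P \<gamma> (\<lambda>_. 0) Qd \<and> zero_sum_network n A E Qd)"

definition zero_sum_MG where
  "zero_sum_MG n A r \<longleftrightarrow> (\<forall>s. \<forall>a\<in>profiles n A. (\<Sum>i<n. r i s a) = 0)"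

definition reward_decomp where
  "reward_decomp n A E r rd \<longleftrightarrow>
     (\<forall>i<n. \<forall>j\<in>nbrs E i. \<forall>s. \<forall>ai\<in>A i. \<forall>aj\<in>A j. rd i j s ai aj \<ge> 0) \<and>
     (\<forall>i<n. \<forall>s. \<forall>a\<in>profiles n A. r i s a = (\<Sum>j\<in>nbrs E i. rd i j s (a i) (a j)))"

definition cond1 where
  "cond1 n A E r \<longleftrightarrow> (\<exists>rd. reward_decomp n A E r rd)"

definition cond1_zero_sum where
  "cond1_zero_sum n A E r \<longleftrightarrow> (\<exists>rd. reward_decomp n A E r rd \<and> zero_sum_network n A E rd)"

definition cond2 where
  "cond2 n A E P \<longleftrightarrow> (\<forall>s s'.
     (central_nodes n E \<noteq> {} \<longrightarrow>
        (\<exists>F :: nat \<Rightarrow> _ \<Rightarrow> real. (\<forall>i\<in>central_nodes n E. \<forall>ai\<in>A i. F i ai \<ge> 0) \<and>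
           (\<forall>a\<in>profiles n A. P s a s' = (\<Sum>i\<in>central_nodes n E. F i (a i))))) \<and>
     (central_nodes n E = {} \<longrightarrow>
        (\<exists>c::real. c \<ge> 0 \<and> (\<forall>a\<in>profiles n A. P s a s' = c))))"

end

theory Submission
  imports Defs
begin

text \<open>The game is an NMG iff for every player \<open>i\<close> and state \<open>s\<close> the reward \<open>r i s\<close> and all
  transition probabilities \<open>P s \<cdot> s'\<close> are sums, over the neighbours \<open>j\<close> of \<open>i\<close>, of functions
  of \<open>(a i, a j)\<close>: take \<open>V = 0\<close> and \<open>V\<close> the indicator of \<open>s'\<close>, and conversely every \<open>Q\<close>-function
  is a linear combination of these. Nonnegative summands are obtained by shifting each summand
  by its minimum. For \<open>n > 2\<close>, a function separable in this sense for every player has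
  vanishing mixed differences in any two coordinates (look at a third player) and does not
  depend on the action of a non-central player (look at a player not adjacent to it), so it is
  a constant plus a sum of functions of the actions of the central players; this is
  condition (2). With two players every function is separable. In the zero-sum case, the
  rewards are nonnegative and sum to zero, so they vanish and the zero family witnesses the
  zero-sum reward decomposition.\<close>

lemma profiles_fun_upd: "a \<in> profiles n A \<Longrightarrow> k < n \<Longrightarrow> x \<in> A k \<Longrightarrow> a(k := x) \<in> profiles n A"
  unfolding profiles_def by (auto simp: PiE_iff extensional_def)

lemma profiles_override:
  "a \<in> profiles n A \<Longrightarrow> J \<subseteq> {..<n} \<Longrightarrow> (\<And>j. j \<in> J \<Longrightarrow> z j \<in> A j)
    \<Longrightarrow> (\<lambda>k. if k \<in> J then z k else a k) \<in> profiles n A"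
  unfolding profiles_def by (auto simp: PiE_iff extensional_def)

lemma profiles_nonempty: "(\<And>i. i < n \<Longrightarrow> A i \<noteq> {}) \<Longrightarrow> profiles n A \<noteq> {}"
  unfolding profiles_def by (simp add: PiE_eq_empty_iff)

lemma nbrs_subset: "undirected_graph n E \<Longrightarrow> nbrs E i \<subseteq> {..<n}"
  unfolding undirected_graph_def nbrs_def by auto

lemma finite_nbrs: "undirected_graph n E \<Longrightarrow> finite (nbrs E i)"
  by (rule finite_subset[OF nbrs_subset]) simp_all

lemma self_notin_nbrs: "undirected_graph n E \<Longrightarrow> i \<notin> nbrs E i"
  unfolding undirected_graph_def nbrs_def by auto

lemma nbrs_sym: "undirected_graph n E \<Longrightarrow> j \<in> nbrs E i \<longleftrightarrow> i \<in> nbrs E j"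
  unfolding undirected_graph_def nbrs_def sym_def by blast

lemma nbrs_nonempty:
  assumes "connected_graph n E" "2 \<le> n" "i < n"
  shows "nbrs E i \<noteq> {}"
proof -
  define j where "j = (if i = 0 then 1 else 0 :: nat)"
  have j: "j < n" "j \<noteq> i" using assms by (auto simp: j_def)
  then have "(i, j) \<in> E\<^sup>*" using assms unfolding connected_graph_def by auto
  then show ?thesis
  proof (cases rule: converse_rtranclE)
    case base
    then show ?thesis using j by simp
  next
    case (step k)
    then show ?thesis unfolding nbrs_def by auto
  qed
qed

lemma central_nodes_subset: "central_nodes n E \<subseteq> {..<n}"
  unfolding central_nodes_def by auto

lemma central_node_in_nbrs:
  "undirected_graph n E \<Longrightarrow> i < n \<Longrightarrow> k \<in> central_nodes n E \<Longrightarrow> k \<noteq> i \<Longrightarrow> k \<in> nbrs E i"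
  unfolding central_nodes_def undirected_graph_def sym_def nbrs_def by blast

lemma noncentral_node_has_non_nbr:
  assumes "undirected_graph n E" "k < n" "k \<notin> central_nodes n E"
  obtains i where "i < n" "i \<noteq> k" "k \<notin> nbrs E i"
proof -
  obtain i where "i < n" "i \<noteq> k" "(k, i) \<notin> E"
    using assms(2,3) unfolding central_nodes_def by auto
  then show thesis using that nbrs_sym[OF assms(1)] unfolding nbrs_def by blast
qed

text \<open>Each summand \<open>u j\<close> is shifted so that its minimum over \<open>A j\<close> becomes an equal share
  of the (nonnegative) value of the whole sum at a joint minimiser.\<close>
lemma nonneg_additive_decomposition:
  fixes u :: "'i \<Rightarrow> 'b \<Rightarrow> real"
  assumes "finite J" "J \<noteq> {}" and fin: "\<And>j. j \<in> J \<Longrightarrow> finite (A j) \<and> A j \<noteq> {}"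
    and nonneg: "\<And>x. (\<And>j. j \<in> J \<Longrightarrow> x j \<in> A j) \<Longrightarrow> 0 \<le> c + (\<Sum>j\<in>J. u j (x j))"
  shows "\<exists>v. (\<forall>j\<in>J. \<forall>y\<in>A j. 0 \<le> v j y) \<and> (\<forall>x. c + (\<Sum>j\<in>J. u j (x j)) = (\<Sum>j\<in>J. v j (x j)))"
proof -
  define m where "m j = Min (u j ` A j)" for j
  define v where "v j y = u j y - m j + (c + sum m J) / card J" for j y
  have "\<forall>j\<in>J. \<exists>y\<in>A j. u j y = m j"
  proof
    fix j assume "j \<in> J"
    then have "m j \<in> u j ` A j" using fin unfolding m_def by (intro Min_in) auto
    then show "\<exists>y\<in>A j. u j y = m j" by auto
  qed
  then obtain x where x: "\<And>j. j \<in> J \<Longrightarrow> x j \<in> A j \<and> u j (x j) = m j"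
    by metis
  have "0 \<le> c + (\<Sum>j\<in>J. u j (x j))" using nonneg x by blast
  then have min_total: "0 \<le> c + sum m J" using x by simp
  have card: "real (card J) > 0" using assms by (simp add: card_gt_0_iff)
  show ?thesis
  proof (intro exI[of _ v] conjI ballI allI)
    fix j y assume "j \<in> J" "y \<in> A j"
    then have "m j \<le> u j y" using fin unfolding m_def by simp
    then show "0 \<le> v j y" unfolding v_def using min_total card by simp
  next
    fix x show "c + (\<Sum>j\<in>J. u j (x j)) = (\<Sum>j\<in>J. v j (x j))"
      unfolding v_def using card by (simp add: sum.distrib sum_subtractf)
  qed
qed

lemma additive_expansion_PiE:
  fixes f :: "('i \<Rightarrow> 'b) \<Rightarrow> 'c::ab_group_add"
  assumes mixed: "\<And>k l b x y. k \<in> I \<Longrightarrow> l \<in> I \<Longrightarrow> k \<noteq> l \<Longrightarrow> b \<in> PiE I A \<Longrightarrow> x \<in> A k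
      \<Longrightarrow> y \<in> A l \<Longrightarrow> f (b(k := x, l := y)) - f (b(l := y)) = f (b(k := x)) - f b"
    and "finite S" "S \<subseteq> I" "a \<in> PiE I A" "b \<in> PiE I A" "\<And>k. k \<notin> S \<Longrightarrow> a k = b k"
  shows "f a = f b + (\<Sum>m\<in>S. f (b(m := a m)) - f b)"
  using assms(2-)
proof (induction S arbitrary: b rule: finite_induct)
  case empty
  then have "a = b" by (simp add: fun_eq_iff)
  then show ?case by simp
next
  case (insert k S)
  define b' where "b' = b(k := a k)"
  have k: "k \<in> I" using insert.prems by simp
  have b': "b' \<in> PiE I A"
    unfolding b'_def using PiE_fun_upd[OF PiE_mem[OF \<open>a \<in> PiE I A\<close> k] insert.prems(3)] k
    by (simp add: insert_absorb)
  have agree: "a m = b' m" if "m \<notin> S" for m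
    using insert.prems(4) that unfolding b'_def by simp
  have IH: "f a = f b' + (\<Sum>m\<in>S. f (b'(m := a m)) - f b')"
    by (rule insert.IH[OF _ insert.prems(2) b']) (use insert.prems(1) agree in auto)
  have shift: "(\<Sum>m\<in>S. f (b'(m := a m)) - f b') = (\<Sum>m\<in>S. f (b(m := a m)) - f b)"
  proof (rule sum.cong[OF refl])
    fix m assume m: "m \<in> S"
    then have "m \<in> I" "k \<noteq> m" using insert by auto
    then show "f (b'(m := a m)) - f b' = f (b(m := a m)) - f b"
      using mixed[OF \<open>m \<in> I\<close> k _ insert.prems(3) PiE_mem[OF insert.prems(2)] PiE_mem[OF insert.prems(2) k]]
      unfolding b'_def fun_upd_twist[OF \<open>k \<noteq> m\<close>] by auto
  qed
  have "f a = f b + ((f b' - f b) + (\<Sum>m\<in>S. f (b(m := a m)) - f b))"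
    unfolding IH shift by (simp add: algebra_simps)
  then show ?case
    unfolding sum.insert[OF insert.hyps] b'_def .
qed

definition neighbour_separable ::
  "nat \<Rightarrow> (nat \<Rightarrow> 'a set) \<Rightarrow> (nat \<times> nat) set \<Rightarrow> nat \<Rightarrow> ((nat \<Rightarrow> 'a) \<Rightarrow> real) \<Rightarrow> bool" where
  "neighbour_separable n A E i f \<longleftrightarrow>
     (\<exists>g. \<forall>a\<in>profiles n A. f a = (\<Sum>j\<in>nbrs E i. g j (a i) (a j)))"

lemma neighbour_separable_cong:
  assumes "\<And>a. a \<in> profiles n A \<Longrightarrow> f a = f' a"
  shows "neighbour_separable n A E i f \<longleftrightarrow> neighbour_separable n A E i f'"
  unfolding neighbour_separable_def using assms by simp

lemma neighbour_separable_zero: "neighbour_separable n A E i (\<lambda>_. 0)"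
  unfolding neighbour_separable_def by (rule exI[of _ "\<lambda>_ _ _. 0"]) simp

lemma neighbour_separable_add:
  assumes "neighbour_separable n A E i f" "neighbour_separable n A E i f'"
  shows "neighbour_separable n A E i (\<lambda>a. f a + f' a)"
proof -
  obtain g g' where "\<forall>a\<in>profiles n A. f a = (\<Sum>j\<in>nbrs E i. g j (a i) (a j))"
    "\<forall>a\<in>profiles n A. f' a = (\<Sum>j\<in>nbrs E i. g' j (a i) (a j))"
    using assms unfolding neighbour_separable_def by blast
  then show ?thesis unfolding neighbour_separable_def
    by (intro exI[of _ "\<lambda>j x y. g j x y + g' j x y"]) (simp add: sum.distrib)
qed

lemma neighbour_separable_cmult:
  assumes "neighbour_separable n A E i f"
  shows "neighbour_separable n A E i (\<lambda>a. c * f a)"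
proof -
  obtain g where "\<forall>a\<in>profiles n A. f a = (\<Sum>j\<in>nbrs E i. g j (a i) (a j))"
    using assms unfolding neighbour_separable_def by blast
  then show ?thesis unfolding neighbour_separable_def
    by (intro exI[of _ "\<lambda>j x y. c * g j x y"]) (simp add: sum_distrib_left)
qed

lemma neighbour_separable_sum:
  "finite S \<Longrightarrow> (\<And>s. s \<in> S \<Longrightarrow> neighbour_separable n A E i (f s))
    \<Longrightarrow> neighbour_separable n A E i (\<lambda>a. \<Sum>s\<in>S. f s a)"
  by (induction S rule: finite_induct) (simp_all add: neighbour_separable_zero neighbour_separable_add)

lemma neighbour_separable_coordinate:
  assumes "k = i \<or> k \<in> nbrs E i" "nbrs E i \<noteq> {}" "finite (nbrs E i)"
  shows "neighbour_separable n A E i (\<lambda>a. u (a k))"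
proof -
  obtain j0 where j0: "j0 \<in> nbrs E i" "k \<noteq> i \<Longrightarrow> j0 = k"
    using assms(1,2) by blast
  have "u (a k) = (\<Sum>j\<in>nbrs E i. if j = j0 then u (if k = i then a i else a j) else 0)" for a
    using j0 assms(3) by (cases "k = i") simp_all
  then show ?thesis unfolding neighbour_separable_def
    by (intro exI[of _ "\<lambda>j x y. if j = j0 then u (if k = i then x else y) else 0"]) simp
qed

lemma Q_decomp_exists_iff_separable:
  "(\<exists>Qd. Q_decomp n A E r P \<gamma> V Qd) \<longleftrightarrow>
    (\<forall>i<n. \<forall>s. neighbour_separable n A E i (Qfun r P \<gamma> V i s))"
proof
  assume "\<exists>Qd. Q_decomp n A E r P \<gamma> V Qd"
  then obtain Qd where "Q_decomp n A E r P \<gamma> V Qd" ..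
  then show "\<forall>i<n. \<forall>s. neighbour_separable n A E i (Qfun r P \<gamma> V i s)"
    unfolding Q_decomp_def neighbour_separable_def by (blast intro: exI[of _ "\<lambda>j. Qd _ j _"])
next
  assume "\<forall>i<n. \<forall>s. neighbour_separable n A E i (Qfun r P \<gamma> V i s)"
  then obtain Qd where "\<forall>i<n. \<forall>s. \<forall>a\<in>profiles n A.
      Qfun r P \<gamma> V i s a = (\<Sum>j\<in>nbrs E i. Qd i s j (a i) (a j))"
    unfolding neighbour_separable_def by metis
  then have "Q_decomp n A E r P \<gamma> V (\<lambda>i j s. Qd i s j)"
    unfolding Q_decomp_def by blast
  then show "\<exists>Qd. Q_decomp n A E r P \<gamma> V Qd" by blast
qed

lemma Qfun_zero: "Qfun r P \<gamma> (\<lambda>_. 0) i s = r i s"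
  unfolding Qfun_def by simp

lemma Qfun_indicator: "Qfun r P \<gamma> (\<lambda>t. if t = s' then 1 else 0) i s a = r i s a + \<gamma> * P s a s'"
  unfolding Qfun_def by (simp add: if_distrib[where f="\<lambda>x. _ * x"] cong: if_cong)

lemma is_NMG_iff_separable:
  assumes "\<gamma> \<noteq> 0"
  shows "is_NMG n A P r \<gamma> E \<longleftrightarrow>
    (\<forall>i<n. \<forall>s. neighbour_separable n A E i (r i s)) \<and>
    (\<forall>i<n. \<forall>s s'. neighbour_separable n A E i (\<lambda>a. P s a s'))"
    (is "_ \<longleftrightarrow> ?rewards \<and> ?transitions")
proof
  assume "is_NMG n A P r \<gamma> E"
  then have Q: "neighbour_separable n A E i (Qfun r P \<gamma> V i s)" if "i < n" for V i s
    using that unfolding is_NMG_def Q_decomp_exists_iff_separable by blast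
  show "?rewards \<and> ?transitions"
  proof (intro conjI allI impI)
    fix i s assume "i < n"
    then show "neighbour_separable n A E i (r i s)"
      using Q[of i "\<lambda>_. 0"] by (simp add: Qfun_zero)
  next
    fix i s s' assume "i < n"
    have "neighbour_separable n A E i
        (\<lambda>a. (1 / \<gamma>) * (Qfun r P \<gamma> (\<lambda>t. if t = s' then 1 else 0) i s a + (-1) * r i s a))"
      using Q[OF \<open>i < n\<close>] Q[OF \<open>i < n\<close>, of "\<lambda>_. 0"]
      by (intro neighbour_separable_cmult neighbour_separable_add) (simp_all add: Qfun_zero)
    moreover have "(\<lambda>a. (1 / \<gamma>) * (Qfun r P \<gamma> (\<lambda>t. if t = s' then 1 else 0) i s a + (-1) * r i s a))
        = (\<lambda>a. P s a s')"
      using assms by (simp add: Qfun_indicator)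
    ultimately show "neighbour_separable n A E i (\<lambda>a. P s a s')" by simp
  qed
next
  assume sep: "?rewards \<and> ?transitions"
  have "neighbour_separable n A E i (Qfun r P \<gamma> V i s)" if "i < n" for V i s
  proof -
    have "Qfun r P \<gamma> V i s = (\<lambda>a. r i s a + \<gamma> * (\<Sum>s'\<in>UNIV. V s' * P s a s'))"
      unfolding Qfun_def by (simp add: mult.commute)
    then show ?thesis
      using sep that
      by (simp add: neighbour_separable_add neighbour_separable_cmult neighbour_separable_sum)
  qed
  then show "is_NMG n A P r \<gamma> E"
    unfolding is_NMG_def Q_decomp_exists_iff_separable by blast
qed

lemma nonneg_neighbour_separable:
  assumes G: "connected_graph n E" and "2 \<le> n" "i < n"
    and fin: "\<And>j. j < n \<Longrightarrow> finite (A j) \<and> A j \<noteq> {}"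
    and nonneg: "\<And>a. a \<in> profiles n A \<Longrightarrow> 0 \<le> f a"
    and sep: "neighbour_separable n A E i f"
  shows "\<exists>g. (\<forall>j\<in>nbrs E i. \<forall>x\<in>A i. \<forall>y\<in>A j. 0 \<le> g j x y) \<and>
    (\<forall>a\<in>profiles n A. f a = (\<Sum>j\<in>nbrs E i. g j (a i) (a j)))"
proof -
  let ?J = "nbrs E i"
  have UG: "undirected_graph n E" using G unfolding connected_graph_def by simp
  obtain g where g: "\<And>a. a \<in> profiles n A \<Longrightarrow> f a = (\<Sum>j\<in>?J. g j (a i) (a j))"
    using sep unfolding neighbour_separable_def by blast
  have "profiles n A \<noteq> {}" by (rule profiles_nonempty) (use fin in blast)
  then obtain b where b: "b \<in> profiles n A" by blast
  define decomposes where "decomposes x v \<longleftrightarrow> (\<forall>j\<in>?J. \<forall>y\<in>A j. 0 \<le> v j y) \<and>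
      (\<forall>z. (\<Sum>j\<in>?J. g j x (z j)) = (\<Sum>j\<in>?J. v j (z j)))" for x and v :: "nat \<Rightarrow> 'a \<Rightarrow> real"
  have "\<exists>v. decomposes x v" if x: "x \<in> A i" for x
  proof -
    have "\<exists>v. (\<forall>j\<in>?J. \<forall>y\<in>A j. 0 \<le> v j y) \<and>
        (\<forall>z. 0 + (\<Sum>j\<in>?J. g j x (z j)) = (\<Sum>j\<in>?J. v j (z j)))"
    proof (rule nonneg_additive_decomposition)
      show "finite ?J" "?J \<noteq> {}" using finite_nbrs[OF UG] nbrs_nonempty[OF G \<open>2 \<le> n\<close> \<open>i < n\<close>] .
      show "finite (A j) \<and> A j \<noteq> {}" if "j \<in> ?J" for j
        using that nbrs_subset[OF UG] fin by auto
    next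
      fix z assume z: "\<And>j. j \<in> ?J \<Longrightarrow> z j \<in> A j"
      let ?a = "\<lambda>k. if k \<in> ?J then z k else (b(i := x)) k"
      have a: "?a \<in> profiles n A"
        using profiles_override[OF profiles_fun_upd[OF b \<open>i < n\<close> x] nbrs_subset[OF UG] z] .
      have "?a i = x" using self_notin_nbrs[OF UG] by simp
      then have "f ?a = (\<Sum>j\<in>?J. g j x (z j))" using g[OF a] by simp
      then show "0 \<le> 0 + (\<Sum>j\<in>?J. g j x (z j))" using nonneg[OF a] by simp
    qed
    then show ?thesis unfolding decomposes_def by simp
  qed
  then obtain v where v: "\<And>x. x \<in> A i \<Longrightarrow> decomposes x (v x)" by metis
  show ?thesis
  proof (intro exI[of _ "\<lambda>j x y. v x j y"] conjI ballI)
    fix j x y assume "j \<in> ?J" "x \<in> A i" "y \<in> A j"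
    then show "0 \<le> v x j y" using v unfolding decomposes_def by blast
  next
    fix a assume a: "a \<in> profiles n A"
    then have "a i \<in> A i" using \<open>i < n\<close> unfolding profiles_def by auto
    then show "f a = (\<Sum>j\<in>?J. v (a i) j (a j))" using g[OF a] v unfolding decomposes_def by simp
  qed
qed

lemma cond1_iff_separable:
  assumes G: "connected_graph n E" and "2 \<le> n"
    and fin: "\<And>j. j < n \<Longrightarrow> finite (A j) \<and> A j \<noteq> {}"
    and nonneg: "\<And>i s a. i < n \<Longrightarrow> a \<in> profiles n A \<Longrightarrow> 0 \<le> r i s a"
  shows "cond1 n A E r \<longleftrightarrow> (\<forall>i<n. \<forall>s. neighbour_separable n A E i (r i s))"
proof
  assume "cond1 n A E r"
  then obtain rd where rd: "reward_decomp n A E r rd" unfolding cond1_def ..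
  show "\<forall>i<n. \<forall>s. neighbour_separable n A E i (r i s)"
  proof (intro allI impI)
    fix i s assume "i < n"
    then show "neighbour_separable n A E i (r i s)"
      using rd unfolding reward_decomp_def neighbour_separable_def
      by (intro exI[of _ "\<lambda>j. rd i j s"]) auto
  qed
next
  assume sep: "\<forall>i<n. \<forall>s. neighbour_separable n A E i (r i s)"
  define decomposes where "decomposes i s g \<longleftrightarrow>
      (\<forall>j\<in>nbrs E i. \<forall>x\<in>A i. \<forall>y\<in>A j. 0 \<le> g j x y) \<and>
      (\<forall>a\<in>profiles n A. r i s a = (\<Sum>j\<in>nbrs E i. g j (a i) (a j)))"
    for i s and g :: "nat \<Rightarrow> 'a \<Rightarrow> 'a \<Rightarrow> real"
  have "\<exists>g. decomposes i s g" if "i < n" for i s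
    unfolding decomposes_def
    by (rule nonneg_neighbour_separable[OF G \<open>2 \<le> n\<close> that]) (use fin nonneg sep that in auto)
  then obtain rd where "\<And>i s. i < n \<Longrightarrow> decomposes i s (rd i s)" by metis
  then have "reward_decomp n A E r (\<lambda>i j s. rd i s j)"
    unfolding reward_decomp_def decomposes_def by blast
  then show "cond1 n A E r" unfolding cond1_def by blast
qed

definition central_decomposable ::
  "nat \<Rightarrow> (nat \<Rightarrow> 'a set) \<Rightarrow> (nat \<times> nat) set \<Rightarrow> ((nat \<Rightarrow> 'a) \<Rightarrow> real) \<Rightarrow> bool" where
  "central_decomposable n A E f \<longleftrightarrow>
     (central_nodes n E \<noteq> {} \<longrightarrow>
        (\<exists>F :: nat \<Rightarrow> 'a \<Rightarrow> real. (\<forall>i\<in>central_nodes n E. \<forall>ai\<in>A i. F i ai \<ge> 0) \<and>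
           (\<forall>a\<in>profiles n A. f a = (\<Sum>i\<in>central_nodes n E. F i (a i))))) \<and>
     (central_nodes n E = {} \<longrightarrow> (\<exists>c::real. c \<ge> 0 \<and> (\<forall>a\<in>profiles n A. f a = c)))"

lemma cond2_iff_central_decomposable:
  "cond2 n A E P \<longleftrightarrow> (\<forall>s s'. central_decomposable n A E (\<lambda>a. P s a s'))"
  unfolding cond2_def central_decomposable_def ..

lemma central_decomposable_imp_separable:
  assumes G: "connected_graph n E" and "2 \<le> n" "i < n" and dec: "central_decomposable n A E f"
  shows "neighbour_separable n A E i f"
proof -
  let ?C = "central_nodes n E"
  have UG: "undirected_graph n E" using G unfolding connected_graph_def by simp
  have coordinate: "neighbour_separable n A E i (\<lambda>a. u (a k))"
    if "k = i \<or> k \<in> ?C" for k and u :: "'a \<Rightarrow> real"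
    using that central_node_in_nbrs[OF UG \<open>i < n\<close>, of k]
    by (intro neighbour_separable_coordinate finite_nbrs[OF UG] nbrs_nonempty[OF G \<open>2 \<le> n\<close> \<open>i < n\<close>])
      auto
  show ?thesis
  proof (cases "?C = {}")
    case True
    then obtain c where "\<forall>a\<in>profiles n A. f a = c"
      using dec unfolding central_decomposable_def by blast
    then show ?thesis
      using neighbour_separable_cong[of n A f "\<lambda>_. c"] coordinate[of i "\<lambda>_. c"] by simp
  next
    case False
    then obtain F where "\<forall>a\<in>profiles n A. f a = (\<Sum>k\<in>?C. F k (a k))"
      using dec unfolding central_decomposable_def by blast
    moreover have "neighbour_separable n A E i (\<lambda>a. \<Sum>k\<in>?C. F k (a k))"
      using coordinate finite_subset[OF central_nodes_subset]
      by (intro neighbour_separable_sum) auto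
    ultimately show ?thesis
      using neighbour_separable_cong[of n A f "\<lambda>a. \<Sum>k\<in>?C. F k (a k)"] by simp
  qed
qed

text \<open>A third player \<open>i\<close> sees \<open>a k\<close> and \<open>a l\<close> only through different summands of its
  decomposition; this is where \<open>2 < n\<close> enters.\<close>
lemma separable_mixed_difference:
  assumes "2 < n" and sep: "\<forall>i<n. neighbour_separable n A E i f"
    and "k < n" "l < n" "k \<noteq> l" "b \<in> profiles n A" "x \<in> A k" "y \<in> A l"
  shows "f (b(k := x, l := y)) - f (b(l := y)) = f (b(k := x)) - f b"
proof -
  have "\<exists>i\<in>{0, 1, 2 :: nat}. i \<noteq> k \<and> i \<noteq> l" by auto
  then obtain i where "i \<in> {0, 1, 2}" "i \<noteq> k" "i \<noteq> l" by blast
  with \<open>2 < n\<close> have i: "i < n" "i \<noteq> k" "i \<noteq> l" by auto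
  obtain g where g: "\<And>a. a \<in> profiles n A \<Longrightarrow> f a = (\<Sum>j\<in>nbrs E i. g j (a i) (a j))"
    using sep i(1) unfolding neighbour_separable_def by blast
  have profiles: "b(k := x, l := y) \<in> profiles n A" "b(l := y) \<in> profiles n A" "b(k := x) \<in> profiles n A"
    using assms by (simp_all add: profiles_fun_upd)
  have "f (b(k := x, l := y)) - f (b(l := y))
      = (\<Sum>j\<in>nbrs E i. g j (b i) ((b(k := x, l := y)) j) - g j (b i) ((b(l := y)) j))"
    using g profiles i by (simp add: sum_subtractf)
  also have "\<dots> = (\<Sum>j\<in>nbrs E i. g j (b i) ((b(k := x)) j) - g j (b i) (b j))"
    using \<open>k \<noteq> l\<close> by (intro sum.cong) auto
  also have "\<dots> = f (b(k := x)) - f b"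
    using g profiles i \<open>b \<in> profiles n A\<close> by (simp add: sum_subtractf)
  finally show ?thesis .
qed

lemma separable_invariant_noncentral:
  assumes UG: "undirected_graph n E" and sep: "\<forall>i<n. neighbour_separable n A E i f"
    and "k < n" "k \<notin> central_nodes n E" "b \<in> profiles n A" "x \<in> A k"
  shows "f (b(k := x)) = f b"
proof -
  obtain i where i: "i < n" "i \<noteq> k" "k \<notin> nbrs E i"
    using noncentral_node_has_non_nbr[OF UG \<open>k < n\<close> \<open>k \<notin> central_nodes n E\<close>] .
  obtain g where g: "\<And>a. a \<in> profiles n A \<Longrightarrow> f a = (\<Sum>j\<in>nbrs E i. g j (a i) (a j))"
    using sep i(1) unfolding neighbour_separable_def by blast
  have "f (b(k := x)) = (\<Sum>j\<in>nbrs E i. g j ((b(k := x)) i) ((b(k := x)) j))"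
    using g[OF profiles_fun_upd] assms by simp
  also have "\<dots> = (\<Sum>j\<in>nbrs E i. g j (b i) (b j))"
    using i by (intro sum.cong) auto
  also have "\<dots> = f b" using g \<open>b \<in> profiles n A\<close> by simp
  finally show ?thesis .
qed

lemma separable_expansion:
  assumes "2 < n" and UG: "undirected_graph n E" and sep: "\<forall>i<n. neighbour_separable n A E i f"
    and a: "a \<in> profiles n A" and b: "b \<in> profiles n A"
  shows "f a = f b + (\<Sum>k\<in>central_nodes n E. f (b(k := a k)) - f b)"
proof -
  have mixed: "f (c(k := x, l := y)) - f (c(l := y)) = f (c(k := x)) - f c"
    if "k \<in> {..<n}" "l \<in> {..<n}" "k \<noteq> l" "c \<in> PiE {..<n} A" "x \<in> A k" "y \<in> A l" for k l c x y
    by (rule separable_mixed_difference[OF \<open>2 < n\<close> sep]) (use that in \<open>simp_all add: profiles_def\<close>)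
  have "a k = b k" if "k \<notin> {..<n}" for k
    using PiE_arb[of a "{..<n}" A k] PiE_arb[of b "{..<n}" A k] a b that unfolding profiles_def by simp
  then have "f a = f b + (\<Sum>k\<in>{..<n}. f (b(k := a k)) - f b)"
    using additive_expansion_PiE[OF mixed finite_lessThan subset_refl] a b unfolding profiles_def
    by blast
  also have "(\<Sum>k\<in>{..<n}. f (b(k := a k)) - f b) = (\<Sum>k\<in>central_nodes n E. f (b(k := a k)) - f b)"
  proof (rule sum.mono_neutral_right[OF finite_lessThan central_nodes_subset], rule ballI)
    fix k assume "k \<in> {..<n} - central_nodes n E"
    moreover have "a k \<in> A k" using a \<open>k \<in> {..<n} - central_nodes n E\<close>
      unfolding profiles_def by (simp add: PiE_mem)
    ultimately show "f (b(k := a k)) - f b = 0"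
      using separable_invariant_noncentral[OF UG sep _ _ b] by simp
  qed
  finally show ?thesis .
qed

lemma separable_imp_central_decomposable:
  assumes "2 < n" and UG: "undirected_graph n E"
    and fin: "\<And>j. j < n \<Longrightarrow> finite (A j) \<and> A j \<noteq> {}"
    and nonneg: "\<And>a. a \<in> profiles n A \<Longrightarrow> 0 \<le> f a"
    and sep: "\<forall>i<n. neighbour_separable n A E i f"
  shows "central_decomposable n A E f"
proof -
  let ?C = "central_nodes n E"
  have "profiles n A \<noteq> {}" by (rule profiles_nonempty) (use fin in blast)
  then obtain b where b: "b \<in> profiles n A" by blast
  define u where "u k y = f (b(k := y)) - f b" for k y
  have expansion: "f a = f b + (\<Sum>k\<in>?C. u k (a k))" if "a \<in> profiles n A" for a
    unfolding u_def using separable_expansion[OF \<open>2 < n\<close> UG sep that b] .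
  show ?thesis
    unfolding central_decomposable_def
  proof (intro conjI impI)
    assume "?C \<noteq> {}"
    have "\<exists>v. (\<forall>k\<in>?C. \<forall>y\<in>A k. 0 \<le> v k y) \<and> (\<forall>x. f b + (\<Sum>k\<in>?C. u k (x k)) = (\<Sum>k\<in>?C. v k (x k)))"
    proof (rule nonneg_additive_decomposition)
      show "finite ?C" by (rule finite_subset[OF central_nodes_subset]) simp
      show "?C \<noteq> {}" by fact
      show "finite (A k) \<and> A k \<noteq> {}" if "k \<in> ?C" for k
        using that central_nodes_subset fin by auto
    next
      fix x assume x: "\<And>k. k \<in> ?C \<Longrightarrow> x k \<in> A k"
      let ?a = "\<lambda>k. if k \<in> ?C then x k else b k"
      have a: "?a \<in> profiles n A" using profiles_override[OF b central_nodes_subset x] .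
      have "(\<Sum>k\<in>?C. u k (?a k)) = (\<Sum>k\<in>?C. u k (x k))" by (rule sum.cong) simp_all
      then show "0 \<le> f b + (\<Sum>k\<in>?C. u k (x k))" using expansion[OF a] nonneg[OF a] by simp
    qed
    then obtain v where v_nonneg: "\<forall>k\<in>?C. \<forall>y\<in>A k. 0 \<le> v k y"
      and v: "\<forall>x. f b + (\<Sum>k\<in>?C. u k (x k)) = (\<Sum>k\<in>?C. v k (x k))" by blast
    show "\<exists>F. (\<forall>i\<in>?C. \<forall>ai\<in>A i. 0 \<le> F i ai) \<and> (\<forall>a\<in>profiles n A. f a = (\<Sum>i\<in>?C. F i (a i)))"
    proof (intro exI[of _ v] conjI ballI)
      fix a assume "a \<in> profiles n A"
      then show "f a = (\<Sum>k\<in>?C. v k (a k))" using expansion v by simp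
    qed (use v_nonneg in blast)
  next
    assume "?C = {}"
    then show "\<exists>c\<ge>0. \<forall>a\<in>profiles n A. f a = c"
      using nonneg[OF b] expansion by (intro exI[of _ "f b"]) simp
  qed
qed

lemma central_decomposable_iff_separable:
  assumes "2 < n" and G: "connected_graph n E"
    and fin: "\<And>j. j < n \<Longrightarrow> finite (A j) \<and> A j \<noteq> {}"
    and nonneg: "\<And>a. a \<in> profiles n A \<Longrightarrow> 0 \<le> f a"
  shows "central_decomposable n A E f \<longleftrightarrow> (\<forall>i<n. neighbour_separable n A E i f)"
proof
  show "\<forall>i<n. neighbour_separable n A E i f" if "central_decomposable n A E f"
    using central_decomposable_imp_separable[OF G _ _ that] \<open>2 < n\<close> by simp
  show "central_decomposable n A E f" if "\<forall>i<n. neighbour_separable n A E i f"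
    using G unfolding connected_graph_def
    by (intro separable_imp_central_decomposable[OF \<open>2 < n\<close> _ _ _ that]) (simp_all add: fin nonneg)
qed

lemma NMG_iff_conditions:
  assumes M: "markov_game n A P r R \<gamma>" and G: "connected_graph n E" and "2 < n"
  shows "is_NMG n A P r \<gamma> E \<longleftrightarrow> cond1 n A E r \<and> cond2 n A E P"
proof -
  have fin: "\<And>j. j < n \<Longrightarrow> finite (A j) \<and> A j \<noteq> {}" and "\<gamma> \<noteq> 0"
    and r_nonneg: "\<And>i s a. i < n \<Longrightarrow> a \<in> profiles n A \<Longrightarrow> 0 \<le> r i s a"
    and P_nonneg: "\<And>s s' a. a \<in> profiles n A \<Longrightarrow> 0 \<le> P s a s'"
    using M unfolding markov_game_def by auto
  have rewards: "cond1 n A E r \<longleftrightarrow> (\<forall>i<n. \<forall>s. neighbour_separable n A E i (r i s))"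
    by (rule cond1_iff_separable) (use G \<open>2 < n\<close> fin r_nonneg in auto)
  have transitions: "central_decomposable n A E (\<lambda>a. P s a s')
      \<longleftrightarrow> (\<forall>i<n. neighbour_separable n A E i (\<lambda>a. P s a s'))" for s s'
    by (rule central_decomposable_iff_separable) (use G \<open>2 < n\<close> fin P_nonneg in auto)
  show ?thesis
    unfolding is_NMG_iff_separable[OF \<open>\<gamma> \<noteq> 0\<close>] rewards cond2_iff_central_decomposable transitions
    by blast
qed

lemma zero_sum_MG_if_zero_sum_NMG:
  assumes "is_zero_sum_NMG n A P r \<gamma> E"
  shows "zero_sum_MG n A r"
  unfolding zero_sum_MG_def
proof (intro allI ballI)
  fix s a assume a: "a \<in> profiles n A"
  obtain Qd where Q: "Q_decomp n A E r P \<gamma> (\<lambda>_. 0) Qd" and zero_sum: "zero_sum_network n A E Qd"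
    using assms unfolding is_zero_sum_NMG_def by blast
  have "(\<Sum>i<n. r i s a) = (\<Sum>i<n. \<Sum>j\<in>nbrs E i. Qd i j s (a i) (a j))"
    using Q a unfolding Q_decomp_def Qfun_zero by (intro sum.cong) auto
  also have "\<dots> = 0" using zero_sum a unfolding zero_sum_network_def by blast
  finally show "(\<Sum>i<n. r i s a) = 0" .
qed

lemma zero_sum_NMG_if_cond1_zero_sum:
  assumes "is_NMG n A P r \<gamma> E" and "cond1_zero_sum n A E r"
  shows "is_zero_sum_NMG n A P r \<gamma> E"
proof -
  obtain rd where "reward_decomp n A E r rd" and "zero_sum_network n A E rd"
    using assms(2) unfolding cond1_zero_sum_def by blast
  then have "Q_decomp n A E r P \<gamma> (\<lambda>_. 0) rd \<and> zero_sum_network n A E rd"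
    unfolding Q_decomp_def reward_decomp_def Qfun_zero by blast
  then show ?thesis using assms(1) unfolding is_zero_sum_NMG_def by blast
qed

lemma zero_sum_NMG_iff_conditions:
  assumes M: "markov_game n A P r R \<gamma>" and G: "connected_graph n E" and "2 < n"
  shows "is_zero_sum_NMG n A P r \<gamma> E \<longleftrightarrow> cond1_zero_sum n A E r \<and> cond2 n A E P"
proof
  assume zero_sum: "is_zero_sum_NMG n A P r \<gamma> E"
  then have "cond2 n A E P"
    using NMG_iff_conditions[OF assms] unfolding is_zero_sum_NMG_def by blast
  have "r i s a = 0" if "i < n" "a \<in> profiles n A" for i s a
  proof -
    have "(\<Sum>k<n. r k s a) = 0"
      using zero_sum_MG_if_zero_sum_NMG[OF zero_sum] that unfolding zero_sum_MG_def by blast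
    moreover have "0 \<le> r k s a" if "k \<in> {..<n}" for k
      using M that \<open>a \<in> profiles n A\<close> unfolding markov_game_def by blast
    ultimately show ?thesis
      using sum_nonneg_eq_0_iff[of "{..<n}" "\<lambda>k. r k s a"] \<open>i < n\<close> by simp
  qed
  then have "reward_decomp n A E r (\<lambda>_ _ _ _ _. 0) \<and> zero_sum_network n A E (\<lambda>_ _ _ _ _. 0)"
    unfolding reward_decomp_def zero_sum_network_def by simp
  then show "cond1_zero_sum n A E r \<and> cond2 n A E P"
    using \<open>cond2 n A E P\<close> unfolding cond1_zero_sum_def by blast
next
  assume conditions: "cond1_zero_sum n A E r \<and> cond2 n A E P"
  then have "is_NMG n A P r \<gamma> E"
    using NMG_iff_conditions[OF assms] unfolding cond1_zero_sum_def cond1_def by blast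
  then show "is_zero_sum_NMG n A P r \<gamma> E"
    using zero_sum_NMG_if_cond1_zero_sum conditions by blast
qed

definition pair_profile :: "nat \<Rightarrow> nat \<Rightarrow> 'a \<Rightarrow> 'a \<Rightarrow> nat \<Rightarrow> 'a" where
  "pair_profile i j x y = (\<lambda>k. if k = i then x else if k = j then y else undefined)"

lemma two_player_nbrs:
  assumes G: "connected_graph 2 E" and "i < 2"
  shows "nbrs E i = {1 - i}"
proof -
  have UG: "undirected_graph 2 E" using G unfolding connected_graph_def by simp
  have "j = 1 - i" if "j \<in> nbrs E i" for j
  proof -
    have "j < 2" "j \<noteq> i" using that nbrs_subset[OF UG, of i] self_notin_nbrs[OF UG, of i] by auto
    then show ?thesis using \<open>i < 2\<close> by arith
  qed
  then have "nbrs E i \<subseteq> {1 - i}" by blast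
  then show ?thesis
    using nbrs_nonempty[OF G order_refl \<open>i < 2\<close>] by blast
qed

lemma pair_profile_complement:
  assumes "i < 2" "a \<in> profiles 2 A"
  shows "pair_profile i (1 - i) (a i) (a (1 - i)) = a"
proof
  fix k
  show "pair_profile i (1 - i) (a i) (a (1 - i)) k = a k"
  proof (cases "k < 2")
    case True
    then have "k = i \<or> k = 1 - i" using \<open>i < 2\<close> by arith
    then show ?thesis unfolding pair_profile_def by auto
  next
    case False
    then have "a k = undefined" "k \<noteq> i" "k \<noteq> 1 - i"
      using assms PiE_arb[of a "{..<2}" A k] unfolding profiles_def by auto
    then show ?thesis unfolding pair_profile_def by simp
  qed
qed

lemma two_player_pair_profile_sum:
  assumes "connected_graph 2 E" "i < 2" "a \<in> profiles 2 A"
  shows "(\<Sum>j\<in>nbrs E i. f (pair_profile i j (a i) (a j))) = f a"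
  using two_player_nbrs[OF assms(1,2)] pair_profile_complement[OF assms(2,3)] by simp

lemma two_player_NMG:
  assumes "connected_graph 2 E"
  shows "is_NMG 2 A P r \<gamma> E"
proof -
  have "neighbour_separable 2 A E i f" if "i < 2" for i f
    unfolding neighbour_separable_def
  proof (intro exI[of _ "\<lambda>j x y. f (pair_profile i j x y)"] ballI)
    fix a assume "a \<in> profiles 2 A"
    then show "f a = (\<Sum>j\<in>nbrs E i. f (pair_profile i j (a i) (a j)))"
      by (rule two_player_pair_profile_sum[OF assms that, symmetric])
  qed
  then show ?thesis unfolding is_NMG_def Q_decomp_exists_iff_separable by blast
qed

lemma two_player_zero_sum_NMG:
  assumes G: "connected_graph 2 E" and "zero_sum_MG 2 A r"
  shows "is_zero_sum_NMG 2 A P r \<gamma> E"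
proof -
  define Qd where "Qd i j s x y = r i s (pair_profile i j x y)" for i j s x y
  have pair_sum: "(\<Sum>j\<in>nbrs E i. Qd i j s (a i) (a j)) = r i s a"
    if "i < 2" "a \<in> profiles 2 A" for i s a
    unfolding Qd_def using two_player_pair_profile_sum[OF G that] .
  have "Q_decomp 2 A E r P \<gamma> (\<lambda>_. 0) Qd"
    unfolding Q_decomp_def Qfun_zero using pair_sum by simp
  moreover have "zero_sum_network 2 A E Qd"
    using assms(2) pair_sum unfolding zero_sum_network_def zero_sum_MG_def by simp
  ultimately show ?thesis
    unfolding is_zero_sum_NMG_def using two_player_NMG[OF G] by blast
qed

theorem proposition1:
  fixes n :: nat and A :: "nat \<Rightarrow> 'a set"
    and P :: "'s::finite \<Rightarrow> (nat \<Rightarrow> 'a) \<Rightarrow> 's \<Rightarrow> real"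
    and r :: "nat \<Rightarrow> 's \<Rightarrow> (nat \<Rightarrow> 'a) \<Rightarrow> real"
    and R \<gamma> :: real and E :: "(nat \<times> nat) set"
  assumes "markov_game n A P r R \<gamma>"
    and "connected_graph n E"
  shows "(2 < n \<longrightarrow>
            (is_NMG n A P r \<gamma> E \<longleftrightarrow> cond1 n A E r \<and> cond2 n A E P) \<and>
            (is_zero_sum_NMG n A P r \<gamma> E \<longleftrightarrow> cond1_zero_sum n A E r \<and> cond2 n A E P)) \<and>
         (n = 2 \<longrightarrow>
            is_NMG n A P r \<gamma> E \<and> (zero_sum_MG n A r \<longrightarrow> is_zero_sum_NMG n A P r \<gamma> E))"
proof (intro conjI impI)
  show "is_NMG n A P r \<gamma> E \<longleftrightarrow> cond1 n A E r \<and> cond2 n A E P" if "2 < n"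
    using NMG_iff_conditions[OF assms that] .
  show "is_zero_sum_NMG n A P r \<gamma> E \<longleftrightarrow> cond1_zero_sum n A E r \<and> cond2 n A E P" if "2 < n"
    using zero_sum_NMG_iff_conditions[OF assms that] .
  show "is_NMG n A P r \<gamma> E" if "n = 2"
    using two_player_NMG[of E A P r \<gamma>] assms(2) that by simp
  show "is_zero_sum_NMG n A P r \<gamma> E" if "n = 2" "zero_sum_MG n A r"
    using two_player_zero_sum_NMG[of E A r P \<gamma>] assms(2) that by simp
qed

end
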